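(* Consider the car-following system with state $x=(D,v,v_{\rm L})\in\mathbb{R}^3$: $$\dot D = v_{\rm L}-v,\qquad \dot v = u - p(v),\qquad \dot v_{\rm L} = a_{\rm L}.$$ Here $p$ is locally Lipschitz with $p(v)\ge 0$, and $a_{\rm L}$ is the leader's acceleration, treated as a given exogenous input. The system is driven by the connected cruise controller $$u = k_{\rm d}(x) = A\big(V(D)-v\big) + B\big(W(v_{\rm L})-v\big) + C a_{\rm L}$$ with $A,B\ge 0$ and $C=0$, where $$V(D)=\min\{\kappa(D-D_{\rm st}),v_{\rm max}\}, \qquad W(v_{\rm L})=\min\{v_{\rm L},v_{\rm max}\}.$$ The constants satisfy $\kappa>0$, $v_{\rm max}>0$ and $D_{\rm st}\in\mathbb{R}$. Let $D_{\rm sf}\in\mathbb{R}$ and $T_{\rm h}>0$, and set $\bar\kappa = 1/T_{\rm h}$. Define $$h_{\rm TH}(x) = \bar\kappa(D-D_{\rm sf}) - v, \qquad \mathcal{S}_{\rm TH}=\{x: h_{\rm TH}(x)\ge0\} = \{x: D\ge D_{\rm sf}+T_{\rm h}v\}.$$ Then the closed loop is safe with respect to $\mathcal{S}_{\rm TH}$, in the sense that every solution with $x(0)\in\mathcal{S}_{\rm TH}$ satisfies $x(t)\in\mathcal{S}_{\rm TH}$ for all $t\ge0$, in either of the following two cases: (i) $v(t)\ge 0$ along the solution, $D_{\rm st}\ge D_{\rm sf}$, and $B=\bar\kappa\ge\kappa$; or (ii) there is $\bar v\ge 0$ such that $v(t),v_{\rm L}(t)\in[0,\bar v]$ along the solution,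 $D_{\rm st}>D_{\rm sf}$, $\bar\kappa\ge\kappa$, and $$A \ \ge\ \frac{|\bar\kappa - B|\,\bar v}{\kappa\,(D_{\rm st}-D_{\rm sf})}.$$
   Context: Standing assumption: solutions of the closed loop system exist and are unique for all $t\ge 0$. *)

theory Defs
  imports "HOL-Analysis.Analysis"
begin

definition V_pol :: "real \<Rightarrow> real \<Rightarrow> real \<Rightarrow> real \<Rightarrow> real" where
  "V_pol \<kappa> Dst vmax D = min (\<kappa> * (D - Dst)) vmax"

definition W_sat :: "real \<Rightarrow> real \<Rightarrow> real" where
  "W_sat vmax vL = min vL vmax"

definition kd :: "real \<Rightarrow> real \<Rightarrow> real \<Rightarrow> real \<Rightarrow> real \<Rightarrow> real \<Rightarrow> real \<Rightarrow> real
                  \<Rightarrow> real \<Rightarrow> real \<Rightarrow> real" where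
  "kd A B C \<kappa> Dst vmax D v vL aL =
     A * (V_pol \<kappa> Dst vmax D - v) + B * (W_sat vmax vL - v) + C * aL"

definition h_TH :: "real \<Rightarrow> real \<Rightarrow> real \<Rightarrow> real \<Rightarrow> real" where
  "h_TH Th Dsf D v = (1 / Th) * (D - Dsf) - v"

end

theory Submission
  imports Defs
begin

text \<open>The barrier function h = (D - Dsf)/Th - v can only decrease below zero where its
derivative is negative, so it suffices to show h' \<ge> 0 wherever h < 0. Since p \<ge> 0, this amounts
to the controller bound kd \<le> (vL - v)/Th. When the headway is violated, v exceeds
\<kappa>(D - Dsf), so the range-policy term A (V(D) - v) contributes at most -A \<kappa> (Dst - Dsf);
this margin must absorb the mismatch (1/Th - B)(W(vL) - v) between the controller gain on the
leader's speed and the barrier's. In case (i) the mismatch vanishes; in case (ii) it is at most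
|1/Th - B| vbar, which the lower bound on A covers.\<close>

lemma last_nonneg_time:
  fixes h :: "real \<Rightarrow> real"
  assumes "continuous_on {0..t1} h" and "0 \<le> t1" and "h 0 \<ge> 0" and "h t1 < 0"
  obtains t0 where "0 \<le> t0" "t0 < t1" "h t0 \<ge> 0" "\<And>s. t0 < s \<Longrightarrow> s \<le> t1 \<Longrightarrow> h s < 0"
proof -
  let ?S = "{s \<in> {0..t1}. h s \<ge> 0}"
  have closed: "closed ?S"
    using continuous_closed_preimage[OF assms(1) closed_real_atLeastAtMost closed_atLeast[of 0]]
    by (simp add: vimage_def Int_def conj_commute)
  have bdd: "bdd_above ?S" by (auto intro: bdd_aboveI2)
  have "?S \<noteq> {}" using assms(2,3) by auto
  then have last: "Sup ?S \<in> ?S" using bdd closed by (rule closed_contains_Sup)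
  have upper: "s \<le> Sup ?S" if "s \<in> ?S" for s using that bdd by (rule cSup_upper)
  show thesis
  proof
    show "Sup ?S < t1" using last assms(4) by (auto simp: less_le)
    show "h s < 0" if "Sup ?S < s" "s \<le> t1" for s
      using upper[of s] that last by fastforce
  qed (use last in auto)
qed

lemma nonneg_invariant_by_barrier:
  fixes h h' :: "real \<Rightarrow> real"
  assumes deriv: "\<And>t. t \<ge> 0 \<Longrightarrow> (h has_real_derivative h' t) (at t within {0..})"
    and init: "h 0 \<ge> 0"
    and barrier: "\<And>t. t \<ge> 0 \<Longrightarrow> h t < 0 \<Longrightarrow> h' t \<ge> 0"
  shows "\<forall>t\<ge>0. h t \<ge> 0"
proof (rule ccontr)
  assume "\<not> (\<forall>t\<ge>0. h t \<ge> 0)"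
  then obtain t1 where "t1 \<ge> 0" "h t1 < 0" by (meson not_le)
  have cont: "continuous_on {0..} h"
    using deriv by (intro DERIV_continuous_on) auto
  then obtain t0 where t0: "0 \<le> t0" "t0 < t1" "h t0 \<ge> 0"
    and neg: "\<And>s. t0 < s \<Longrightarrow> s \<le> t1 \<Longrightarrow> h s < 0"
    using last_nonneg_time[of t1 h] \<open>t1 \<ge> 0\<close> \<open>h t1 < 0\<close> init
    by (metis atLeastAtMost_iff atLeast_iff continuous_on_subset subsetI)
  have "h t0 \<le> h t1"
  proof (rule DERIV_nonneg_imp_increasing_open[of t0 t1 h])
    fix s assume s: "t0 < s" "s < t1"
    then have "(h has_real_derivative h' s) (at s)"
      using deriv[of s] t0 at_within_interior[of s "{0..}"] by simp
    with s t0 show "\<exists>y. (h has_real_derivative y) (at s) \<and> 0 \<le> y"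
      using barrier neg by fastforce
  next
    show "continuous_on {t0..t1} h" using t0 by (auto intro: continuous_on_subset[OF cont])
  qed (use t0 in simp)
  with t0 \<open>h t1 < 0\<close> show False by simp
qed

lemma scaled_gap_le_speed:
  fixes k \<kappa> D Dsf v :: real
  assumes "0 \<le> v" "0 \<le> \<kappa>" "\<kappa> \<le> k" "k * (D - Dsf) \<le> v"
  shows "\<kappa> * (D - Dsf) \<le> v"
proof (cases "D \<ge> Dsf")
  case True
  then have "\<kappa> * (D - Dsf) \<le> k * (D - Dsf)" using assms(3) by (intro mult_right_mono) auto
  with assms(4) show ?thesis by linarith
next
  case False
  then have "\<kappa> * (D - Dsf) \<le> 0" using assms(2) by (intro mult_nonneg_nonpos) auto
  with assms(1) show ?thesis by linarith
qed

lemma V_pol_le_speed_minus_margin: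
  fixes k \<kappa> D Dsf v :: real
  assumes "0 \<le> v" "0 \<le> \<kappa>" "\<kappa> \<le> k" "k * (D - Dsf) \<le> v"
  shows "V_pol \<kappa> Dst vmax D \<le> v - \<kappa> * (Dst - Dsf)"
proof -
  have "V_pol \<kappa> Dst vmax D \<le> \<kappa> * (D - Dsf) - \<kappa> * (Dst - Dsf)"
    by (simp add: V_pol_def algebra_simps)
  with scaled_gap_le_speed[OF assms] show ?thesis by linarith
qed

lemma kd_le_headway_rate:
  fixes k :: real
  assumes "0 \<le> A" "0 \<le> v" "0 \<le> \<kappa>" "\<kappa> \<le> k" "k * (D - Dsf) \<le> v"
    and gain_mismatch: "\<bar>k - B\<bar> * \<bar>W_sat vmax vL - v\<bar> \<le> A * (\<kappa> * (Dst - Dsf))"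
  shows "kd A B 0 \<kappa> Dst vmax D v vL aL \<le> k * (vL - v)"
proof -
  let ?V = "V_pol \<kappa> Dst vmax D" and ?W = "W_sat vmax vL"
  have "A * (?V - v) \<le> A * (- (\<kappa> * (Dst - Dsf)))"
    using V_pol_le_speed_minus_margin[OF assms(2-5), of Dst vmax] assms(1) by (intro mult_left_mono) auto
  moreover have "k * (?W - v) \<le> k * (vL - v)"
    using assms(3,4) by (intro mult_left_mono) (auto simp: W_sat_def)
  moreover have "- ((k - B) * (?W - v)) \<le> \<bar>k - B\<bar> * \<bar>?W - v\<bar>"
    by (simp add: abs_mult[symmetric])
  ultimately show ?thesis
    using gain_mismatch by (simp add: kd_def algebra_simps)
qed

lemma kd_le_headway_rate_matched_gain:
  fixes k :: real
  assumes "0 \<le> A" "0 \<le> v" "0 \<le> \<kappa>" "\<kappa> \<le> k" "k * (D - Dsf) \<le> v" "Dsf \<le> Dst"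
  shows "kd A k 0 \<kappa> Dst vmax D v vL aL \<le> k * (vL - v)"
  using assms by (intro kd_le_headway_rate) auto

lemma kd_le_headway_rate_bounded_speeds:
  fixes k vbar :: real
  assumes "0 \<le> v" "v \<le> vbar" "0 \<le> vL" "vL \<le> vbar" "0 < vmax"
    and "0 < \<kappa>" "\<kappa> \<le> k" "k * (D - Dsf) \<le> v" "Dsf < Dst"
    and A_bound: "A \<ge> \<bar>k - B\<bar> * vbar / (\<kappa> * (Dst - Dsf))"
  shows "kd A B 0 \<kappa> Dst vmax D v vL aL \<le> k * (vL - v)"
proof (rule kd_le_headway_rate)
  have margin_pos: "\<kappa> * (Dst - Dsf) > 0" using assms(6,9) by simp
  have "0 \<le> \<bar>k - B\<bar> * vbar / (\<kappa> * (Dst - Dsf))" using assms(1,2) margin_pos by simp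
  with A_bound show "0 \<le> A" by linarith
  have "\<bar>W_sat vmax vL - v\<bar> \<le> vbar" using assms(1-5) by (auto simp: W_sat_def)
  then have "\<bar>k - B\<bar> * \<bar>W_sat vmax vL - v\<bar> \<le> \<bar>k - B\<bar> * vbar" by (simp add: mult_left_mono)
  also have "\<dots> \<le> A * (\<kappa> * (Dst - Dsf))" using A_bound margin_pos by (simp add: divide_le_eq)
  finally show "\<bar>k - B\<bar> * \<bar>W_sat vmax vL - v\<bar> \<le> A * (\<kappa> * (Dst - Dsf))" .
qed (use assms in auto)

theorem theorem3:
  fixes p :: "real \<Rightarrow> real"
    and aL D v vL :: "real \<Rightarrow> real"
    and A B C \<kappa> vmax Dst Dsf Th :: real
  assumes p_lip: "local_lipschitz (UNIV :: real set) UNIV (\<lambda>_::real. p)"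
    and p_nonneg: "\<And>w. p w \<ge> 0"
    and AB: "A \<ge> 0" "B \<ge> 0" and C0: "C = 0"
    and \<kappa>_pos: "\<kappa> > 0" and vmax_pos: "vmax > 0"
    and Th_pos: "Th > 0"
    and D_ode: "\<And>t. t \<ge> 0 \<Longrightarrow> (D has_real_derivative (vL t - v t)) (at t within {0..})"
    and v_ode: "\<And>t. t \<ge> 0 \<Longrightarrow>
        (v has_real_derivative (kd A B C \<kappa> Dst vmax (D t) (v t) (vL t) (aL t) - p (v t))) (at t within {0..})"
    and vL_ode: "\<And>t. t \<ge> 0 \<Longrightarrow> (vL has_real_derivative (aL t)) (at t within {0..})"
    and init: "h_TH Th Dsf (D 0) (v 0) \<ge> 0"
    and cases:
      "((\<forall>t\<ge>0. v t \<ge> 0) \<and> Dst \<ge> Dsf \<and> B = 1 / Th \<and> 1 / Th \<ge> \<kappa>)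
       \<or> (\<exists>vbar\<ge>0. (\<forall>t\<ge>0. 0 \<le> v t \<and> v t \<le> vbar \<and> 0 \<le> vL t \<and> vL t \<le> vbar)
            \<and> Dst > Dsf \<and> 1 / Th \<ge> \<kappa>
            \<and> A \<ge> \<bar>1 / Th - B\<bar> * vbar / (\<kappa> * (Dst - Dsf)))"
  shows "\<forall>t\<ge>0. h_TH Th Dsf (D t) (v t) \<ge> 0"
  \<comment> \<open>The Lipschitz hypothesis on p is only needed for existence and uniqueness of solutions.\<close>
proof (rule nonneg_invariant_by_barrier)
  let ?kd = "\<lambda>t. kd A B 0 \<kappa> Dst vmax (D t) (v t) (vL t) (aL t)"
  show "((\<lambda>t. h_TH Th Dsf (D t) (v t)) has_real_derivative 1 / Th * (vL t - v t) - (?kd t - p (v t)))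
          (at t within {0..})" if "t \<ge> 0" for t
    using D_ode[OF that] v_ode[OF that] Th_pos unfolding h_TH_def C0
    by (auto intro!: derivative_eq_intros)
  show "0 \<le> 1 / Th * (vL t - v t) - (?kd t - p (v t))"
    if "t \<ge> 0" and "h_TH Th Dsf (D t) (v t) < 0" for t
  proof -
    have violated: "1 / Th * (D t - Dsf) \<le> v t" using that(2) by (simp add: h_TH_def)
    from cases have "?kd t \<le> 1 / Th * (vL t - v t)"
      using kd_le_headway_rate_matched_gain[OF AB(1) _ less_imp_le[OF \<kappa>_pos] _ violated]
        kd_le_headway_rate_bounded_speeds[OF _ _ _ _ vmax_pos \<kappa>_pos _ violated] \<open>t \<ge> 0\<close>
      by blast
    with p_nonneg[of "v t"] show ?thesis by simp
  qed
qed (use init in simp)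

end
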